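(* Let $V$ be a finite nonempty set, $c\in\mathbb{R}^{P_V}$, $U\subseteq V$, and $\hat x$ a maximally specific partial function on $P_V$ with $\hat x^{-1}(1)\cap (U\times(V\setminus U))=\emptyset$. If $c_{ij}\le 0$ for all $ij\in (U\times(V\setminus U))\setminus\hat x^{-1}(0)$, then there is a maximizer $x^*$ of $\varphi_c$ over $X_V[\hat x]$ such that $x^*_{ij}=0$ for all $ij\in (U\times(V\setminus U))\setminus\hat x^{-1}(0)$.
   Context: $P_V=\{pq\in V^2\mid p\neq q\}$; $X_V$ is the set of $x\in\{0,1\}^{P_V}$ with $x_{pq}+x_{qr}-x_{pr}\le 1$ for all pairwise distinct $p,q,r\in V$; $\varphi_c(x)=\sum_{pq\in P_V}c_{pq}x_{pq}$. A partial function $\tilde x$ is a map from $\operatorname{dom}(\tilde x)\subseteq P_V$ to $\{0,1\}$, $\tilde x^{-1}(b)$ the pairs mapped to $b$, and $X_V[\tilde x]=\{x\in X_V\mid x_{pq}=\tilde x_{pq}\ \forall pq\in\operatorname{dom}(\tilde x)\}$. A pair $pq$ is decided if $x_{pq}=x'_{pq}$ for all $x,x'\in X_V[\tilde x]$; $\tilde x$ is maximally specific if $X_V[\tilde x]\ne\emptyset$ and the decided pairs are exactly $\operatorname{dom}(\tilde x)$. *)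

theory Defs
  imports Main "HOL.Real"
begin

definition PV :: "'a set \<Rightarrow> ('a \<times> 'a) set" where
  "PV V = {(p, q). p \<in> V \<and> q \<in> V \<and> p \<noteq> q}"

definition XV :: "'a set \<Rightarrow> (('a \<times> 'a) \<Rightarrow> nat) set" where
  "XV V = {x. (\<forall>pq \<in> PV V. x pq \<in> {0, 1}) \<and> (\<forall>pq. pq \<notin> PV V \<longrightarrow> x pq = 0) \<and>
     (\<forall>p \<in> V. \<forall>q \<in> V. \<forall>r \<in> V. p \<noteq> q \<and> q \<noteq> r \<and> p \<noteq> r \<longrightarrow>
        int (x (p, q)) + int (x (q, r)) - int (x (p, r)) \<le> 1)}"

definition phi :: "'a set \<Rightarrow> (('a \<times> 'a) \<Rightarrow> real) \<Rightarrow> (('a \<times> 'a) \<Rightarrow> nat) \<Rightarrow> real" where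
  "phi V c x = (\<Sum>pq \<in> PV V. c pq * real (x pq))"

definition partial_fn :: "'a set \<Rightarrow> (('a \<times> 'a) \<rightharpoonup> nat) \<Rightarrow> bool" where
  "partial_fn V xt \<longleftrightarrow> dom xt \<subseteq> PV V \<and> ran xt \<subseteq> {0, 1}"

definition preim :: "(('a \<times> 'a) \<rightharpoonup> nat) \<Rightarrow> nat \<Rightarrow> ('a \<times> 'a) set" where
  "preim xt b = {pq. xt pq = Some b}"

definition XV_restr :: "'a set \<Rightarrow> (('a \<times> 'a) \<rightharpoonup> nat) \<Rightarrow> (('a \<times> 'a) \<Rightarrow> nat) set" where
  "XV_restr V xt = {x \<in> XV V. \<forall>pq \<in> dom xt. xt pq = Some (x pq)}"

definition decided :: "'a set \<Rightarrow> (('a \<times> 'a) \<rightharpoonup> nat) \<Rightarrow> ('a \<times> 'a) \<Rightarrow> bool" where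
  "decided V xt pq \<longleftrightarrow> (\<forall>x \<in> XV_restr V xt. \<forall>x' \<in> XV_restr V xt. x pq = x' pq)"

definition maximally_specific :: "'a set \<Rightarrow> (('a \<times> 'a) \<rightharpoonup> nat) \<Rightarrow> bool" where
  "maximally_specific V xt \<longleftrightarrow> XV_restr V xt \<noteq> {} \<and>
     {pq \<in> PV V. decided V xt pq} = dom xt"

end

theory Submission
  imports Defs
begin

(* Take any maximizer of phi over the finite nonempty set X_V[xh] and set all its
   entries on the cut U x (V - U) to 0.  This keeps the transitivity inequalities, since
   x_pr = 1 with p in U, r not in U forces (p,q) or (q,r) into the cut; it respects xh, which
   takes no value 1 on the cut; and it does not decrease phi, as the cleared entries outside
   preim xh 0 have nonpositive cost while those inside were 0 already. *)

definition zero_on :: "'b set \<Rightarrow> ('b \<Rightarrow> nat) \<Rightarrow> 'b \<Rightarrow> nat" where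
  "zero_on A x b = (if b \<in> A then 0 else x b)"

lemma finite_XV:
  assumes "finite V"
  shows "finite (XV V)"
proof -
  have "finite (PV V)"
    by (rule finite_subset[of _ "V \<times> V"]) (use assms in \<open>auto simp: PV_def\<close>)
  then have "finite {f. \<forall>pq. (pq \<in> PV V \<longrightarrow> f pq \<in> ({0, 1} :: nat set)) \<and>
                           (pq \<notin> PV V \<longrightarrow> f pq = 0)}"
    by (intro finite_set_of_finite_funs) auto
  then show ?thesis
    by (rule finite_subset[rotated]) (auto simp: XV_def)
qed

lemma finite_XV_restr:
  assumes "finite V"
  shows "finite (XV_restr V xt)"
  by (rule finite_subset[OF _ finite_XV[OF assms]]) (auto simp: XV_restr_def)

lemma ex_maximizer:
  fixes f :: "'b \<Rightarrow> 'c :: linorder"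
  assumes "finite S" and "S \<noteq> {}"
  shows "\<exists>x \<in> S. \<forall>y \<in> S. f y \<le> f x"
proof -
  have "Max (f ` S) \<in> f ` S"
    using assms by simp
  then obtain x where "x \<in> S" and "f x = Max (f ` S)"
    by auto
  then show ?thesis
    using assms(1) by (intro bexI[of _ x]) auto
qed

lemma XV_outside_PV:
  assumes "x \<in> XV V" and "pq \<notin> PV V"
  shows "x pq = 0"
  using assms unfolding XV_def by blast

lemma XV_le_1:
  assumes "x \<in> XV V"
  shows "x pq \<le> 1"
proof (cases "pq \<in> PV V")
  case True
  then have "x pq \<in> {0, 1}"
    using assms unfolding XV_def by blast
  then show ?thesis
    by auto
next
  case False
  then show ?thesis
    using XV_outside_PV[OF assms] by simp
qed

lemma XV_transitivity:
  assumes "x \<in> XV V" and "p \<in> V" "q \<in> V" "r \<in> V" "p \<noteq> q" "q \<noteq> r" "p \<noteq> r"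
  shows "int (x (p, q)) + int (x (q, r)) - int (x (p, r)) \<le> 1"
  using assms unfolding XV_def by blast

lemma zero_on_in: "b \<in> A \<Longrightarrow> zero_on A x b = 0"
  by (simp add: zero_on_def)

lemma zero_on_notin: "b \<notin> A \<Longrightarrow> zero_on A x b = x b"
  by (simp add: zero_on_def)

lemma zero_on_le: "zero_on A x b \<le> x b"
  by (simp add: zero_on_def)

lemma zero_on_cut_XV:
  assumes x: "x \<in> XV V"
  shows "zero_on (U \<times> (V - U)) x \<in> XV V"
proof -
  let ?z = "zero_on (U \<times> (V - U)) x"
  have z_le_x: "?z pq \<le> x pq" for pq
    by (rule zero_on_le)
  have z_le_1: "?z pq \<le> 1" for pq
    by (rule order_trans[OF z_le_x XV_le_1[OF x]])
  have "int (?z (p, q)) + int (?z (q, r)) - int (?z (p, r)) \<le> 1"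
    if "p \<in> V" "q \<in> V" "r \<in> V" "p \<noteq> q" "q \<noteq> r" "p \<noteq> r" for p q r
  proof (cases "(p, r) \<in> U \<times> (V - U)")
    case True
    have "(p, q) \<in> U \<times> (V - U) \<or> (q, r) \<in> U \<times> (V - U)"
      using True \<open>q \<in> V\<close> by blast
    then have "?z (p, q) = 0 \<or> ?z (q, r) = 0"
      by (elim disjE) (simp_all add: zero_on_in)
    then show ?thesis
      using z_le_1[of "(p, q)"] z_le_1[of "(q, r)"] by linarith
  next
    case False
    then have "?z (p, r) = x (p, r)"
      by (rule zero_on_notin)
    then show ?thesis
      using XV_transitivity[OF x that] z_le_x[of "(p, q)"] z_le_x[of "(q, r)"] by linarith
  qed
  moreover have "?z pq \<in> {0, 1}" for pq
    using z_le_1[of pq] by auto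
  moreover have "?z pq = 0" if "pq \<notin> PV V" for pq
    using z_le_x[of pq] XV_outside_PV[OF x that] by simp
  ultimately show ?thesis
    unfolding XV_def by blast
qed

lemma zero_on_XV_restr:
  assumes "x \<in> XV_restr V xt" and "partial_fn V xt"
    and "zero_on A x \<in> XV V" and "preim xt 1 \<inter> A = {}"
  shows "zero_on A x \<in> XV_restr V xt"
proof -
  have "xt pq = Some (zero_on A x pq)" if "pq \<in> dom xt" for pq
  proof -
    have xt_pq: "xt pq = Some (x pq)"
      using assms(1) that by (simp add: XV_restr_def)
    then have "x pq \<in> ran xt"
      by (rule ranI)
    then have "x pq \<in> {0, 1}"
      using assms(2) by (auto simp: partial_fn_def)
    moreover have "x pq \<noteq> 1" if "pq \<in> A"
      using assms(4) xt_pq that by (auto simp: preim_def)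
    ultimately show ?thesis
      using xt_pq by (cases "pq \<in> A") (auto simp: zero_on_def)
  qed
  then show ?thesis
    using assms(3) by (simp add: XV_restr_def)
qed

lemma phi_le_phi_zero_on:
  assumes "x \<in> XV_restr V xt" and "\<forall>pq \<in> A - preim xt 0. c pq \<le> 0"
  shows "phi V c x \<le> phi V c (zero_on A x)"
  unfolding phi_def
proof (rule sum_mono)
  fix pq
  show "c pq * real (x pq) \<le> c pq * real (zero_on A x pq)"
  proof (cases "pq \<in> A")
    case True
    show ?thesis
    proof (cases "pq \<in> preim xt 0")
      case True
      then have "xt pq = Some 0" and "pq \<in> dom xt"
        by (auto simp: preim_def)
      then have "x pq = 0"
        using assms(1) by (auto simp: XV_restr_def)
      then show ?thesis
        using \<open>pq \<in> A\<close> by (simp add: zero_on_in)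
    next
      case False
      then have "c pq \<le> 0"
        using assms(2) \<open>pq \<in> A\<close> by blast
      then show ?thesis
        using \<open>pq \<in> A\<close> by (simp add: zero_on_in mult_nonpos_nonneg)
    qed
  qed (simp add: zero_on_notin)
qed

theorem corollary6p3:
  fixes V U :: "'a set" and c :: "('a \<times> 'a) \<Rightarrow> real" and xh :: "('a \<times> 'a) \<rightharpoonup> nat"
  assumes "finite V" and "V \<noteq> {}" and "U \<subseteq> V"
    and "partial_fn V xh" and "maximally_specific V xh"
    and "preim xh 1 \<inter> (U \<times> (V - U)) = {}"
    and "\<forall>ij \<in> (U \<times> (V - U)) - preim xh 0. c ij \<le> 0"
  shows "\<exists>xs \<in> XV_restr V xh. (\<forall>x \<in> XV_restr V xh. phi V c x \<le> phi V c xs) \<and>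
           (\<forall>ij \<in> (U \<times> (V - U)) - preim xh 0. xs ij = 0)"
proof -
  let ?cut = "U \<times> (V - U)"
  have "XV_restr V xh \<noteq> {}"
    using assms(5) by (simp add: maximally_specific_def)
  then obtain x0 where x0: "x0 \<in> XV_restr V xh"
    and x0_max: "\<forall>x \<in> XV_restr V xh. phi V c x \<le> phi V c x0"
    using ex_maximizer[OF finite_XV_restr[OF assms(1)]] by blast
  have "zero_on ?cut x0 \<in> XV V"
    using x0 by (intro zero_on_cut_XV) (simp add: XV_restr_def)
  then have "zero_on ?cut x0 \<in> XV_restr V xh"
    using zero_on_XV_restr x0 assms(4,6) by blast
  moreover have "phi V c x0 \<le> phi V c (zero_on ?cut x0)"
    using phi_le_phi_zero_on x0 assms(7) by blast
  with x0_max have "\<forall>x \<in> XV_restr V xh. phi V c x \<le> phi V c (zero_on ?cut x0)"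
    by fastforce
  moreover have "\<forall>ij \<in> ?cut - preim xh 0. zero_on ?cut x0 ij = 0"
    by (simp add: zero_on_def)
  ultimately show ?thesis
    by blast
qed

end
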